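(* Let $w$ be a non-degenerate 4-web on an open subset of $\mathbb{R}^3$ formed by three foliations by surfaces and one foliation by curves. Then the rank of $w$ is at most $2$.
   Context: For a web $w$ formed by foliations $\mathcal{F}_1,\dots,\mathcal{F}_d$ (leaves may have different dimensions), an abelian relation is a $d$-tuple of 1-forms $(\sigma_1,\dots,\sigma_d)$ such that each $\sigma_i$ vanishes on the leaves of $\mathcal{F}_i$, each $\sigma_i$ is closed, and $\sigma_1+\dots+\sigma_d=0$; the rank of $w$ is the dimension of the real vector space of abelian relations. Non-degenerate means: the tangent planes of the three surface foliations are in general position at each point (their conormal covectors form a basis of the cotangent space), and the tangent line of the curve foliation is, at each point, not contained in the tangent plane of any of the three surface foliations. The statement is local. *)

theory Defs
  imports "HOL-Analysis.Analysis" "HOL-Library.Extended_Nat"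
begin

text \<open>We work in coordinates on an open subset of real^3.
  A 1-form (and also a covector field) on a set is a map real^3 to real^3,
  the value at x being the coefficient vector (a1,a2,a3) of a1 dx1 + a2 dx2 + a3 dx3;
  pairing with tangent vectors is the inner product.\<close>

definition pdiff :: "3 \<Rightarrow> (real^3 \<Rightarrow> real^3) \<Rightarrow> real^3 \<Rightarrow> real^3" where
  "pdiff j f x = vector_derivative (\<lambda>t. f (x + t *\<^sub>R axis j 1)) (at 0)"

fun iter_pd :: "3 list \<Rightarrow> (real^3 \<Rightarrow> real^3) \<Rightarrow> real^3 \<Rightarrow> real^3" where
  "iter_pd [] f = f"
| "iter_pd (j # js) f = pdiff j (iter_pd js f)"

definition smooth_on :: "(real^3) set \<Rightarrow> (real^3 \<Rightarrow> real^3) \<Rightarrow> bool" where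
  "smooth_on U f \<longleftrightarrow>
     (\<forall>js. continuous_on U (iter_pd js f) \<and>
        (\<forall>j. \<forall>x\<in>U. (\<lambda>t. iter_pd js f (x + t *\<^sub>R axis j 1)) differentiable (at 0)))"

definition closed_form :: "(real^3) set \<Rightarrow> (real^3 \<Rightarrow> real^3) \<Rightarrow> bool" where
  "closed_form U \<sigma> \<longleftrightarrow> (\<forall>x\<in>U. \<forall>j k. pdiff j \<sigma> x $ k = pdiff k \<sigma> x $ j)"

text \<open>A (smooth, codimension one) foliation by surfaces, given by a smooth nowhere
  vanishing conormal field nu satisfying the Frobenius integrability condition
  nu /\ d nu = 0; the tangent plane of the leaf through x is the kernel of nu x.\<close>
definition surface_foliation :: "(real^3) set \<Rightarrow> (real^3 \<Rightarrow> real^3) \<Rightarrow> bool" where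
  "surface_foliation U \<nu> \<longleftrightarrow> smooth_on U \<nu> \<and> (\<forall>x\<in>U. \<nu> x \<noteq> 0) \<and>
     (\<forall>x\<in>U. \<nu> x $ 1 * (pdiff 2 \<nu> x $ 3 - pdiff 3 \<nu> x $ 2)
            + \<nu> x $ 2 * (pdiff 3 \<nu> x $ 1 - pdiff 1 \<nu> x $ 3)
            + \<nu> x $ 3 * (pdiff 1 \<nu> x $ 2 - pdiff 2 \<nu> x $ 1) = 0)"

text \<open>A (smooth) foliation by curves, given by a smooth nowhere vanishing tangent
  vector field v; the tangent line of the leaf through x is spanned by v x.\<close>
definition curve_foliation :: "(real^3) set \<Rightarrow> (real^3 \<Rightarrow> real^3) \<Rightarrow> bool" where
  "curve_foliation U v \<longleftrightarrow> smooth_on U v \<and> (\<forall>x\<in>U. v x \<noteq> 0)"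

definition nondegenerate_web ::
  "(real^3) set \<Rightarrow> (real^3 \<Rightarrow> real^3) \<Rightarrow> (real^3 \<Rightarrow> real^3) \<Rightarrow> (real^3 \<Rightarrow> real^3)
     \<Rightarrow> (real^3 \<Rightarrow> real^3) \<Rightarrow> bool" where
  "nondegenerate_web U \<nu>1 \<nu>2 \<nu>3 v \<longleftrightarrow>
     (\<forall>x\<in>U. det (vector [\<nu>1 x, \<nu>2 x, \<nu>3 x] :: real^3^3) \<noteq> 0 \<and>
             \<nu>1 x \<bullet> v x \<noteq> 0 \<and> \<nu>2 x \<bullet> v x \<noteq> 0 \<and> \<nu>3 x \<bullet> v x \<noteq> 0)"

definition abelian_relation ::
  "(real^3) set \<Rightarrow> (real^3 \<Rightarrow> real^3) \<Rightarrow> (real^3 \<Rightarrow> real^3) \<Rightarrow> (real^3 \<Rightarrow> real^3)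
     \<Rightarrow> (real^3 \<Rightarrow> real^3) \<Rightarrow> (nat \<Rightarrow> real^3 \<Rightarrow> real^3) \<Rightarrow> bool" where
  "abelian_relation V \<nu>1 \<nu>2 \<nu>3 v \<sigma> \<longleftrightarrow>
     (\<forall>i<4. smooth_on V (\<sigma> i) \<and> closed_form V (\<sigma> i)) \<and>
     (\<forall>x\<in>V. \<forall>t. \<nu>1 x \<bullet> t = 0 \<longrightarrow> \<sigma> 0 x \<bullet> t = 0) \<and>
     (\<forall>x\<in>V. \<forall>t. \<nu>2 x \<bullet> t = 0 \<longrightarrow> \<sigma> 1 x \<bullet> t = 0) \<and>
     (\<forall>x\<in>V. \<forall>t. \<nu>3 x \<bullet> t = 0 \<longrightarrow> \<sigma> 2 x \<bullet> t = 0) \<and>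
     (\<forall>x\<in>V. \<sigma> 3 x \<bullet> v x = 0) \<and>
     (\<forall>x\<in>V. \<sigma> 0 x + \<sigma> 1 x + \<sigma> 2 x + \<sigma> 3 x = 0)"

definition forms_lin_indep ::
  "(real^3) set \<Rightarrow> nat \<Rightarrow> (nat \<Rightarrow> nat \<Rightarrow> real^3 \<Rightarrow> real^3) \<Rightarrow> bool" where
  "forms_lin_indep V k \<rho> \<longleftrightarrow>
     (\<forall>c::nat \<Rightarrow> real. (\<forall>i<4. \<forall>x\<in>V. (\<Sum>j<k. c j *\<^sub>R \<rho> j i x) = 0) \<longrightarrow> (\<forall>j<k. c j = 0))"

text \<open>The rank: dimension of the real vector space of abelian relations on V
  (as an extended natural number; infinity if infinite dimensional).\<close>
definition web_rank ::
  "(real^3) set \<Rightarrow> (real^3 \<Rightarrow> real^3) \<Rightarrow> (real^3 \<Rightarrow> real^3) \<Rightarrow> (real^3 \<Rightarrow> real^3)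
     \<Rightarrow> (real^3 \<Rightarrow> real^3) \<Rightarrow> enat" where
  "web_rank V \<nu>1 \<nu>2 \<nu>3 v =
     Sup {enat k | k. \<exists>\<rho>. (\<forall>j<k. abelian_relation V \<nu>1 \<nu>2 \<nu>3 v (\<rho> j)) \<and> forms_lin_indep V k \<rho>}"

end

theory Submission
  imports Defs
begin

text \<open>The surface components of an abelian relation are \<open>\<sigma>\<^sub>i = f\<^sub>i \<nu>\<^sub>i\<close>, and the curve
  component is \<open>-(\<sigma>\<^sub>1 + \<sigma>\<^sub>2 + \<sigma>\<^sub>3)\<close>, so it only imposes \<open>\<Sum>\<^sub>i f\<^sub>i (\<nu>\<^sub>i \<bullet> v) = 0\<close>.
  Closedness of \<open>f\<^sub>i \<nu>\<^sub>i\<close> determines \<open>\<nabla>f\<^sub>i\<close> up to a multiple of \<open>\<nu>\<^sub>i\<close>, and differentiating the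
  constraint fixes the remaining components, because the \<open>\<nu>\<^sub>i\<close> form a basis and \<open>\<nu>\<^sub>i \<bullet> v \<noteq> 0\<close>.
  Thus \<open>f = (f\<^sub>1, f\<^sub>2, f\<^sub>3)\<close> satisfies \<open>|\<nabla>f| \<le> \<kappa> |f|\<close> with \<open>\<kappa>\<close> continuous, and a Gronwall
  argument along coordinate segments of a box around \<open>p\<close> shows that the relation vanishes on the
  box once \<open>f(p) = 0\<close>. Since \<open>f(p)\<close> lies in the plane orthogonal to \<open>(\<nu>\<^sub>i(p) \<bullet> v(p))\<^sub>i\<close>,
  any three abelian relations are linearly dependent.\<close>

unbundle cross3_syntax

definition grad :: "(real^3 \<Rightarrow> real) \<Rightarrow> real^3 \<Rightarrow> real^3" where
  "grad g x = (\<chi> j. deriv (\<lambda>t. g (x + t *\<^sub>R axis j 1)) 0)"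

definition has_grad :: "(real^3 \<Rightarrow> real) \<Rightarrow> real^3 \<Rightarrow> real^3 \<Rightarrow> bool" where
  "has_grad g G x \<longleftrightarrow> (\<forall>j. ((\<lambda>t. g (x + t *\<^sub>R axis j 1)) has_real_derivative G $ j) (at 0))"

definition curl :: "(real^3 \<Rightarrow> real^3) \<Rightarrow> real^3 \<Rightarrow> real^3" where
  "curl \<nu> x = vector [pdiff 2 \<nu> x $ 3 - pdiff 3 \<nu> x $ 2, pdiff 3 \<nu> x $ 1 - pdiff 1 \<nu> x $ 3,
                     pdiff 1 \<nu> x $ 2 - pdiff 2 \<nu> x $ 1]"

lemma smooth_on_continuous: "smooth_on U f \<Longrightarrow> continuous_on U f"
  unfolding smooth_on_def by (metis iter_pd.simps(1))

lemma smooth_on_continuous_pdiff: "smooth_on U f \<Longrightarrow> continuous_on U (pdiff j f)"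
  unfolding smooth_on_def by (metis iter_pd.simps)

lemma smooth_on_subset: "smooth_on U f \<Longrightarrow> V \<subseteq> U \<Longrightarrow> smooth_on V f"
  unfolding smooth_on_def by (meson continuous_on_subset subsetD)

lemma has_vector_derivative_pdiff:
  "(\<lambda>t. f (x + t *\<^sub>R axis j 1)) differentiable (at 0) \<Longrightarrow>
   ((\<lambda>t. f (x + t *\<^sub>R axis j 1)) has_vector_derivative pdiff j f x) (at 0)"
  unfolding pdiff_def by (simp add: vector_derivative_works[symmetric])

lemma smooth_on_has_vector_derivative_pdiff:
  "smooth_on U f \<Longrightarrow> x \<in> U \<Longrightarrow> ((\<lambda>t. f (x + t *\<^sub>R axis j 1)) has_vector_derivative pdiff j f x) (at 0)"
  unfolding smooth_on_def by (metis has_vector_derivative_pdiff iter_pd.simps(1))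

lemma has_vector_derivative_line_transform:
  fixes f g :: "real^3 \<Rightarrow> 'a::real_normed_vector"
  assumes "((\<lambda>t. g (x + t *\<^sub>R axis j 1)) has_vector_derivative d) (at 0)"
    and "open V" "x \<in> V" "\<And>y. y \<in> V \<Longrightarrow> f y = g y"
  shows "((\<lambda>t. f (x + t *\<^sub>R axis j 1)) has_vector_derivative d) (at 0)"
proof -
  have "open ((\<lambda>t. x + t *\<^sub>R axis j 1) -` V)"
    by (rule continuous_open_vimage[OF \<open>open V\<close>]) (intro continuous_intros)
  then show ?thesis
    by (rule has_vector_derivative_transform_within_open[OF assms(1)]) (use assms(3,4) in auto)
qed

lemma has_grad_imp_grad: "has_grad g G x \<Longrightarrow> grad g x = G"
  unfolding has_grad_def grad_def by (simp add: DERIV_imp_deriv vec_eq_iff)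

lemma has_grad_grad: "has_grad g G x \<Longrightarrow> has_grad g (grad g x) x"
  by (frule has_grad_imp_grad) simp

lemma has_grad_gradI:
  "(\<And>j. \<exists>d. ((\<lambda>t. g (x + t *\<^sub>R axis j 1)) has_real_derivative d) (at 0)) \<Longrightarrow>
   has_grad g (grad g x) x"
  unfolding has_grad_def grad_def by (auto simp: DERIV_deriv_iff_has_field_derivative)

lemma has_grad_add: "has_grad f F x \<Longrightarrow> has_grad g G x \<Longrightarrow> has_grad (\<lambda>y. f y + g y) (F + G) x"
  unfolding has_grad_def by (auto intro!: derivative_eq_intros)

lemma has_grad_mult:
  "has_grad f F x \<Longrightarrow> has_grad g G x \<Longrightarrow> has_grad (\<lambda>y. f y * g y) (g x *\<^sub>R F + f x *\<^sub>R G) x"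
  unfolding has_grad_def by (auto intro!: derivative_eq_intros simp: algebra_simps)

lemma has_grad_inner:
  assumes "smooth_on U f" "smooth_on U g" "x \<in> U"
  shows "has_grad (\<lambda>y. f y \<bullet> g y) (\<chi> j. pdiff j f x \<bullet> g x + f x \<bullet> pdiff j g x) x"
  unfolding has_grad_def has_real_derivative_iff_has_vector_derivative
  using bounded_bilinear.has_vector_derivative[OF bounded_bilinear_inner
      smooth_on_has_vector_derivative_pdiff[OF assms(1,3)] smooth_on_has_vector_derivative_pdiff[OF assms(2,3)]]
  by (simp add: add.commute)

lemma has_grad_zero_on_open:
  assumes "has_grad g G x" "open V" "x \<in> V" "\<And>y. y \<in> V \<Longrightarrow> g y = 0"
  shows "G = 0"
proof -
  have "((\<lambda>t. g (x + t *\<^sub>R axis j 1)) has_vector_derivative 0) (at 0)" for j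
    by (rule has_vector_derivative_line_transform[OF has_vector_derivative_const assms(2-4)])
  moreover have "((\<lambda>t. g (x + t *\<^sub>R axis j 1)) has_vector_derivative G $ j) (at 0)" for j
    using assms(1) unfolding has_grad_def has_real_derivative_iff_has_vector_derivative by blast
  ultimately show ?thesis
    by (metis vec_eq_iff vector_derivative_unique_at zero_index)
qed

lemma has_real_derivative_line_shift:
  assumes "has_grad g G (x + t *\<^sub>R axis j 1)"
  shows "((\<lambda>s. g (x + s *\<^sub>R axis j 1)) has_real_derivative G $ j) (at t)"
  using assms DERIV_shift[of "\<lambda>s. g (x + s *\<^sub>R axis j 1)" "G $ j" 0 t]
  unfolding has_grad_def by (simp add: scaleR_add_left add_ac)

definition conormal_coeff :: "(real^3 \<Rightarrow> real^3) \<Rightarrow> (real^3 \<Rightarrow> real^3) \<Rightarrow> real^3 \<Rightarrow> real" where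
  "conormal_coeff \<nu> \<tau> x = (\<tau> x \<bullet> \<nu> x) / (\<nu> x \<bullet> \<nu> x)"

text \<open>Only first-order differentiability is required of \<open>\<tau>\<close>, so that the notion is
  evidently closed under linear combinations.\<close>
definition closed_multiple :: "(real^3) set \<Rightarrow> (real^3 \<Rightarrow> real^3) \<Rightarrow> (real^3 \<Rightarrow> real^3) \<Rightarrow> bool" where
  "closed_multiple V \<nu> \<tau> \<longleftrightarrow>
     (\<forall>x\<in>V. \<forall>j. (\<lambda>t. \<tau> (x + t *\<^sub>R axis j 1)) differentiable (at 0)) \<and> closed_form V \<tau> \<and>
     (\<forall>x\<in>V. \<forall>t. \<nu> x \<bullet> t = 0 \<longrightarrow> \<tau> x \<bullet> t = 0)"

lemma closed_multiple_sum:
  assumes "\<And>k. k \<in> J \<Longrightarrow> closed_multiple V \<nu> (\<tau> k)"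
  shows "closed_multiple V \<nu> (\<lambda>x. \<Sum>k\<in>J. c k *\<^sub>R \<tau> k x)"
proof -
  have deriv: "((\<lambda>t. \<Sum>k\<in>J. c k *\<^sub>R \<tau> k (x + t *\<^sub>R axis j 1)) has_vector_derivative
      (\<Sum>k\<in>J. c k *\<^sub>R pdiff j (\<tau> k) x)) (at 0)" if "x \<in> V" for x j
    using assms that unfolding closed_multiple_def
    by (intro has_vector_derivative_sum) (auto intro!: derivative_eq_intros has_vector_derivative_pdiff)
  then have pdiff_sum: "pdiff j (\<lambda>x. \<Sum>k\<in>J. c k *\<^sub>R \<tau> k x) x = (\<Sum>k\<in>J. c k *\<^sub>R pdiff j (\<tau> k) x)"
    if "x \<in> V" for x j
    using vector_derivative_at[OF deriv[OF that]]
    unfolding pdiff_def[of j "\<lambda>x. \<Sum>k\<in>J. c k *\<^sub>R \<tau> k x"] by simp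
  have "closed_form V (\<lambda>x. \<Sum>k\<in>J. c k *\<^sub>R \<tau> k x)"
    using assms unfolding closed_form_def closed_multiple_def
    by (simp add: pdiff_sum sum_component)
  moreover have "(\<Sum>k\<in>J. c k *\<^sub>R \<tau> k x) \<bullet> t = 0" if "x \<in> V" "\<nu> x \<bullet> t = 0" for x t
    using assms that unfolding closed_multiple_def by (simp add: inner_sum_left)
  moreover have "(\<lambda>t. \<Sum>k\<in>J. c k *\<^sub>R \<tau> k (x + t *\<^sub>R axis j 1)) differentiable (at 0)"
    if "x \<in> V" for x j
    using deriv[OF that] by (rule differentiableI_vector)
  ultimately show ?thesis
    unfolding closed_multiple_def by blast
qed

locale closed_conormal_multiple =
  fixes V :: "(real^3) set" and \<nu> \<tau> :: "real^3 \<Rightarrow> real^3"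
  assumes open_V: "open V" and smooth_conormal: "smooth_on V \<nu>"
    and conormal_nonzero: "\<And>x. x \<in> V \<Longrightarrow> \<nu> x \<noteq> 0"
    and closed_multiple: "closed_multiple V \<nu> \<tau>"
begin

lemma form_eq_coeff_scaleR: "x \<in> V \<Longrightarrow> \<tau> x = conormal_coeff \<nu> \<tau> x *\<^sub>R \<nu> x"
proof -
  assume x: "x \<in> V"
  define t where "t = \<tau> x - conormal_coeff \<nu> \<tau> x *\<^sub>R \<nu> x"
  have "\<nu> x \<bullet> t = 0"
    using conormal_nonzero[OF x] unfolding t_def conormal_coeff_def
    by (simp add: inner_diff_right inner_commute)
  then have "\<tau> x \<bullet> t = 0" "(conormal_coeff \<nu> \<tau> x *\<^sub>R \<nu> x) \<bullet> t = 0"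
    using closed_multiple x unfolding closed_multiple_def by auto
  then have "t \<bullet> t = 0"
    unfolding t_def by (simp only: inner_diff_left)
  then show ?thesis unfolding t_def by simp
qed

lemma form_has_vector_derivative:
  "x \<in> V \<Longrightarrow> ((\<lambda>t. \<tau> (x + t *\<^sub>R axis j 1)) has_vector_derivative pdiff j \<tau> x) (at 0)"
  using closed_multiple has_vector_derivative_pdiff unfolding closed_multiple_def by blast

lemma coeff_has_grad: "x \<in> V \<Longrightarrow> has_grad (conormal_coeff \<nu> \<tau>) (grad (conormal_coeff \<nu> \<tau>) x) x"
proof -
  assume x: "x \<in> V"
  have inner_deriv: "((\<lambda>t. \<alpha> (x + t *\<^sub>R axis j 1) \<bullet> \<nu> (x + t *\<^sub>R axis j 1)) has_real_derivative
      \<alpha> x \<bullet> pdiff j \<nu> x + pdiff j \<alpha> x \<bullet> \<nu> x) (at 0)"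
    if "((\<lambda>t. \<alpha> (x + t *\<^sub>R axis j 1)) has_vector_derivative pdiff j \<alpha> x) (at 0)" for \<alpha> j
    using bounded_bilinear.has_vector_derivative[OF bounded_bilinear_inner that
        smooth_on_has_vector_derivative_pdiff[OF smooth_conormal x]]
    by (simp add: has_real_derivative_iff_has_vector_derivative)
  have "((\<lambda>t. (\<tau> (x + t *\<^sub>R axis j 1) \<bullet> \<nu> (x + t *\<^sub>R axis j 1))
          / (\<nu> (x + t *\<^sub>R axis j 1) \<bullet> \<nu> (x + t *\<^sub>R axis j 1))) has_real_derivative
      ((\<tau> x \<bullet> pdiff j \<nu> x + pdiff j \<tau> x \<bullet> \<nu> x) * (\<nu> x \<bullet> \<nu> x)
        - (\<tau> x \<bullet> \<nu> x) * (\<nu> x \<bullet> pdiff j \<nu> x + pdiff j \<nu> x \<bullet> \<nu> x)) / ((\<nu> x \<bullet> \<nu> x) * (\<nu> x \<bullet> \<nu> x))) (at 0)"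
    for j
    using DERIV_divide[OF inner_deriv inner_deriv] form_has_vector_derivative[OF x]
      smooth_on_has_vector_derivative_pdiff[OF smooth_conormal x] conormal_nonzero[OF x]
    by simp
  then have "\<exists>d. ((\<lambda>t. conormal_coeff \<nu> \<tau> (x + t *\<^sub>R axis j 1)) has_real_derivative d) (at 0)" for j
    unfolding conormal_coeff_def by blast
  then show ?thesis by (rule has_grad_gradI)
qed

lemma pdiff_form_eq:
  assumes x: "x \<in> V"
  shows "pdiff j \<tau> x = (grad (conormal_coeff \<nu> \<tau>) x $ j) *\<^sub>R \<nu> x + conormal_coeff \<nu> \<tau> x *\<^sub>R pdiff j \<nu> x"
proof -
  have "((\<lambda>t. conormal_coeff \<nu> \<tau> (x + t *\<^sub>R axis j 1) *\<^sub>R \<nu> (x + t *\<^sub>R axis j 1)) has_vector_derivative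
      conormal_coeff \<nu> \<tau> x *\<^sub>R pdiff j \<nu> x + (grad (conormal_coeff \<nu> \<tau>) x $ j) *\<^sub>R \<nu> x) (at 0)"
    using coeff_has_grad[OF x] smooth_on_has_vector_derivative_pdiff[OF smooth_conormal x]
    unfolding has_grad_def by (auto intro!: derivative_eq_intros)
  then have "((\<lambda>t. \<tau> (x + t *\<^sub>R axis j 1)) has_vector_derivative
      conormal_coeff \<nu> \<tau> x *\<^sub>R pdiff j \<nu> x + (grad (conormal_coeff \<nu> \<tau>) x $ j) *\<^sub>R \<nu> x) (at 0)"
    by (rule has_vector_derivative_line_transform[OF _ open_V x form_eq_coeff_scaleR])
  with form_has_vector_derivative[OF x] show ?thesis
    by (metis add.commute vector_derivative_unique_at)
qed

text \<open>Closedness of \<open>f \<nu>\<close> is the identity \<open>df \<and> \<nu> + f d\<nu> = 0\<close>.\<close>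
lemma grad_coeff_cross_conormal:
  assumes x: "x \<in> V"
  shows "grad (conormal_coeff \<nu> \<tau>) x \<times> \<nu> x = - conormal_coeff \<nu> \<tau> x *\<^sub>R curl \<nu> x"
proof -
  have "pdiff j \<tau> x $ k = pdiff k \<tau> x $ j" for j k
    using closed_multiple x unfolding closed_multiple_def closed_form_def by blast
  then show ?thesis
    unfolding pdiff_form_eq[OF x] vec_eq_iff forall_3
    by (simp add: cross_components curl_def vector_def algebra_simps)
qed

end

text \<open>At a point, write \<open>n\<^sub>i\<close> for the conormals, \<open>c\<^sub>i\<close> for their curls, \<open>a\<^sub>i = n\<^sub>i \<bullet> v\<close>,
  \<open>A\<^sub>i = \<nabla>a\<^sub>i\<close> and \<open>G\<^sub>i = \<nabla>f\<^sub>i\<close>. The equations satisfied by an abelian relation are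
  \<open>G\<^sub>i \<times> n\<^sub>i = -f\<^sub>i c\<^sub>i\<close> and \<open>\<Sum>\<^sub>i a\<^sub>i G\<^sub>i + f\<^sub>i A\<^sub>i = 0\<close>; solving them expresses \<open>G\<^sub>1\<close> linearly
  in \<open>f\<close>, with coefficients built from \<open>gradient_coeff\<close> and \<open>w = n\<^sub>2 \<times> n\<^sub>3\<close>.\<close>
definition gradient_coeff ::
  "real^3 \<Rightarrow> real^3 \<Rightarrow> real \<Rightarrow> real^3 \<Rightarrow> real \<Rightarrow> real^3 \<Rightarrow> real^3 \<Rightarrow> real^3" where
  "gradient_coeff n1 w a1 n a c A = ((a * ((n \<times> c) \<bullet> w) / (n \<bullet> n) - A \<bullet> w) / (a1 * (n1 \<bullet> w))) *\<^sub>R n1"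

lemma scaleR_inner_self_eq_of_cross:
  fixes n G c :: "real^3"
  assumes "G \<times> n = - f *\<^sub>R c"
  shows "(n \<bullet> n) *\<^sub>R G = (n \<bullet> G) *\<^sub>R n - f *\<^sub>R (n \<times> c)"
proof -
  from assms have "n \<times> (G \<times> n) = - f *\<^sub>R (n \<times> c)" by (simp add: cross_mult_right)
  then show ?thesis by (simp add: Lagrange algebra_simps)
qed

text \<open>Pairing with \<open>w = n\<^sub>2 \<times> n\<^sub>3\<close> annihilates the unknown normal components of \<open>G\<^sub>2, G\<^sub>3\<close>;
  the constraint then yields \<open>G\<^sub>1 \<bullet> w\<close>, hence the normal component of \<open>G\<^sub>1\<close>.\<close>
lemma gradient_eq_lincomb:
  fixes n1 n2 n3 c1 c2 c3 G1 G2 G3 A1 A2 A3 :: "real^3" and f1 f2 f3 a1 a2 a3 :: real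
  assumes cross: "G1 \<times> n1 = - f1 *\<^sub>R c1" "G2 \<times> n2 = - f2 *\<^sub>R c2" "G3 \<times> n3 = - f3 *\<^sub>R c3"
    and constraint: "a1 *\<^sub>R G1 + a2 *\<^sub>R G2 + a3 *\<^sub>R G3 + f1 *\<^sub>R A1 + f2 *\<^sub>R A2 + f3 *\<^sub>R A3 = 0"
    and nonzero: "n1 \<noteq> 0" "n2 \<noteq> 0" "n3 \<noteq> 0" "a1 \<noteq> 0"
    and basis: "n1 \<bullet> (n2 \<times> n3) \<noteq> 0"
  shows "G1 = f1 *\<^sub>R (gradient_coeff n1 (n2 \<times> n3) a1 n1 a1 c1 A1 - (1 / (n1 \<bullet> n1)) *\<^sub>R (n1 \<times> c1))
    + f2 *\<^sub>R gradient_coeff n1 (n2 \<times> n3) a1 n2 a2 c2 A2 + f3 *\<^sub>R gradient_coeff n1 (n2 \<times> n3) a1 n3 a3 c3 A3"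
proof -
  define w where "w = n2 \<times> n3"
  have w: "n2 \<bullet> w = 0" "n3 \<bullet> w = 0" by (simp_all add: w_def dot_cross_self)
  have nn: "n1 \<bullet> n1 \<noteq> 0" "n2 \<bullet> n2 \<noteq> 0" "n3 \<bullet> n3 \<noteq> 0" using nonzero by auto
  note e1 = scaleR_inner_self_eq_of_cross[OF cross(1)]
  have d1: "(n1 \<bullet> n1) * (G1 \<bullet> w) = (n1 \<bullet> G1) * (n1 \<bullet> w) - f1 * ((n1 \<times> c1) \<bullet> w)"
    using arg_cong[OF e1, of "\<lambda>z. z \<bullet> w"] by (simp add: inner_diff_left)
  have "(n2 \<bullet> n2) * (G2 \<bullet> w) = - f2 * ((n2 \<times> c2) \<bullet> w)"
    using arg_cong[OF scaleR_inner_self_eq_of_cross[OF cross(2)], of "\<lambda>z. z \<bullet> w"] w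
    by (simp add: inner_diff_left)
  then have d2: "G2 \<bullet> w = - f2 * ((n2 \<times> c2) \<bullet> w) / (n2 \<bullet> n2)" using nn by (simp add: field_simps)
  have "(n3 \<bullet> n3) * (G3 \<bullet> w) = - f3 * ((n3 \<times> c3) \<bullet> w)"
    using arg_cong[OF scaleR_inner_self_eq_of_cross[OF cross(3)], of "\<lambda>z. z \<bullet> w"] w
    by (simp add: inner_diff_left)
  then have d3: "G3 \<bullet> w = - f3 * ((n3 \<times> c3) \<bullet> w) / (n3 \<bullet> n3)" using nn by (simp add: field_simps)
  have "a1 * (G1 \<bullet> w) + a2 * (G2 \<bullet> w) + a3 * (G3 \<bullet> w)
      + f1 * (A1 \<bullet> w) + f2 * (A2 \<bullet> w) + f3 * (A3 \<bullet> w) = 0"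
    using arg_cong[OF constraint, of "\<lambda>z. z \<bullet> w"] by (simp add: inner_add_left)
  then have d: "G1 \<bullet> w = - (a2 * (G2 \<bullet> w) + a3 * (G3 \<bullet> w)
      + f1 * (A1 \<bullet> w) + f2 * (A2 \<bullet> w) + f3 * (A3 \<bullet> w)) / a1"
    using nonzero(4) by (simp add: field_simps)
  define k where "k n a c A = (a * ((n \<times> c) \<bullet> w) / (n \<bullet> n) - A \<bullet> w) / (a1 * (n1 \<bullet> w))"
    for n a c A
  have n1_G1: "n1 \<bullet> G1 = ((n1 \<bullet> n1) * (G1 \<bullet> w) + f1 * ((n1 \<times> c1) \<bullet> w)) / (n1 \<bullet> w)"
    using d1 basis unfolding w_def by (simp add: field_simps)
  have normal: "(n1 \<bullet> G1) / (n1 \<bullet> n1) = f1 * k n1 a1 c1 A1 + f2 * k n2 a2 c2 A2 + f3 * k n3 a3 c3 A3"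
    unfolding n1_G1 d d2 d3 k_def using nn basis nonzero(4) unfolding w_def by (simp add: field_simps)
  have "G1 = ((n1 \<bullet> G1) / (n1 \<bullet> n1)) *\<^sub>R n1 - (f1 / (n1 \<bullet> n1)) *\<^sub>R (n1 \<times> c1)"
    using arg_cong[OF e1, of "\<lambda>z. (1 / (n1 \<bullet> n1)) *\<^sub>R z"] nn by (simp add: algebra_simps)
  then show ?thesis
    unfolding normal gradient_coeff_def w_def[symmetric] k_def[symmetric] by (simp add: algebra_simps)
qed

lemma norm_scaleR_sum3_le:
  fixes P1 P2 P3 :: "'a::real_normed_vector"
  shows "norm (f1 *\<^sub>R P1 + f2 *\<^sub>R P2 + f3 *\<^sub>R P3)
    \<le> (norm P1 + norm P2 + norm P3) * (\<bar>f1\<bar> + \<bar>f2\<bar> + \<bar>f3\<bar>)"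
proof -
  define S where "S = \<bar>f1\<bar> + \<bar>f2\<bar> + \<bar>f3\<bar>"
  have le_S: "\<bar>f\<bar> * norm P \<le> S * norm P" if "\<bar>f\<bar> \<le> S" for f and P :: 'a
    using that by (simp add: mult_right_mono)
  have "norm (f1 *\<^sub>R P1 + f2 *\<^sub>R P2 + f3 *\<^sub>R P3) \<le> \<bar>f1\<bar> * norm P1 + \<bar>f2\<bar> * norm P2 + \<bar>f3\<bar> * norm P3"
    using norm_triangle_ineq[of "f1 *\<^sub>R P1 + f2 *\<^sub>R P2" "f3 *\<^sub>R P3"]
      norm_triangle_ineq[of "f1 *\<^sub>R P1" "f2 *\<^sub>R P2"]
    by (simp only: norm_scaleR)
  also have "\<dots> \<le> S * norm P1 + S * norm P2 + S * norm P3"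
    by (intro add_mono le_S) (auto simp: S_def)
  finally show ?thesis unfolding S_def by (simp add: algebra_simps)
qed

definition web_gradient_bound ::
  "(real^3 \<Rightarrow> real^3) \<Rightarrow> (real^3 \<Rightarrow> real^3) \<Rightarrow> (real^3 \<Rightarrow> real^3) \<Rightarrow> (real^3 \<Rightarrow> real^3)
     \<Rightarrow> real^3 \<Rightarrow> real" where
  "web_gradient_bound \<nu>1 \<nu>2 \<nu>3 v x =
     (let P = (\<lambda>\<nu>. gradient_coeff (\<nu>1 x) (\<nu>2 x \<times> \<nu>3 x) (\<nu>1 x \<bullet> v x) (\<nu> x) (\<nu> x \<bullet> v x) (curl \<nu> x)
                    (grad (\<lambda>y. \<nu> y \<bullet> v y) x))
      in norm (P \<nu>1 - (1 / (\<nu>1 x \<bullet> \<nu>1 x)) *\<^sub>R (\<nu>1 x \<times> curl \<nu>1 x)) + norm (P \<nu>2) + norm (P \<nu>3))"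

lemma web_gradient_bound_nonneg: "0 \<le> web_gradient_bound \<nu>1 \<nu>2 \<nu>3 v x"
  unfolding web_gradient_bound_def Let_def by simp

lemma norm_grad_conormal_coeff_le:
  assumes F1: "closed_conormal_multiple V \<nu>1 \<tau>1" and F2: "closed_conormal_multiple V \<nu>2 \<tau>2"
    and F3: "closed_conormal_multiple V \<nu>3 \<tau>3"
    and v: "smooth_on V v" and relation: "\<And>y. y \<in> V \<Longrightarrow> (\<tau>1 y + \<tau>2 y + \<tau>3 y) \<bullet> v y = 0"
    and x: "x \<in> V" and transversal: "\<nu>1 x \<bullet> v x \<noteq> 0" and basis: "\<nu>1 x \<bullet> (\<nu>2 x \<times> \<nu>3 x) \<noteq> 0"
  shows "norm (grad (conormal_coeff \<nu>1 \<tau>1) x) \<le> web_gradient_bound \<nu>1 \<nu>2 \<nu>3 v x *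
    (\<bar>conormal_coeff \<nu>1 \<tau>1 x\<bar> + \<bar>conormal_coeff \<nu>2 \<tau>2 x\<bar> + \<bar>conormal_coeff \<nu>3 \<tau>3 x\<bar>)"
proof -
  interpret F1: closed_conormal_multiple V \<nu>1 \<tau>1 by (fact F1)
  interpret F2: closed_conormal_multiple V \<nu>2 \<tau>2 by (fact F2)
  interpret F3: closed_conormal_multiple V \<nu>3 \<tau>3 by (fact F3)
  let ?f1 = "conormal_coeff \<nu>1 \<tau>1" and ?f2 = "conormal_coeff \<nu>2 \<tau>2" and ?f3 = "conormal_coeff \<nu>3 \<tau>3"
  let ?a1 = "\<lambda>y. \<nu>1 y \<bullet> v y" and ?a2 = "\<lambda>y. \<nu>2 y \<bullet> v y" and ?a3 = "\<lambda>y. \<nu>3 y \<bullet> v y"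
  have grad_a: "has_grad (\<lambda>y. \<nu> y \<bullet> v y) (grad (\<lambda>y. \<nu> y \<bullet> v y) x) x" if "smooth_on V \<nu>" for \<nu>
    using has_grad_inner[OF that v x] by (rule has_grad_grad)
  have "has_grad (\<lambda>y. ?f1 y * ?a1 y + ?f2 y * ?a2 y + ?f3 y * ?a3 y)
     (?a1 x *\<^sub>R grad ?f1 x + ?f1 x *\<^sub>R grad ?a1 x + (?a2 x *\<^sub>R grad ?f2 x + ?f2 x *\<^sub>R grad ?a2 x)
      + (?a3 x *\<^sub>R grad ?f3 x + ?f3 x *\<^sub>R grad ?a3 x)) x"
    by (intro has_grad_add has_grad_mult F1.coeff_has_grad F2.coeff_has_grad F3.coeff_has_grad
        grad_a F1.smooth_conormal F2.smooth_conormal F3.smooth_conormal x)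
  moreover have "?f1 y * ?a1 y + ?f2 y * ?a2 y + ?f3 y * ?a3 y = 0" if "y \<in> V" for y
    using relation[OF that] F1.form_eq_coeff_scaleR[OF that] F2.form_eq_coeff_scaleR[OF that]
      F3.form_eq_coeff_scaleR[OF that]
    by (simp add: inner_add_left)
  ultimately have "?a1 x *\<^sub>R grad ?f1 x + ?f1 x *\<^sub>R grad ?a1 x + (?a2 x *\<^sub>R grad ?f2 x + ?f2 x *\<^sub>R grad ?a2 x)
      + (?a3 x *\<^sub>R grad ?f3 x + ?f3 x *\<^sub>R grad ?a3 x) = 0"
    by (rule has_grad_zero_on_open[OF _ F1.open_V x])
  then have "?a1 x *\<^sub>R grad ?f1 x + ?a2 x *\<^sub>R grad ?f2 x + ?a3 x *\<^sub>R grad ?f3 x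
      + ?f1 x *\<^sub>R grad ?a1 x + ?f2 x *\<^sub>R grad ?a2 x + ?f3 x *\<^sub>R grad ?a3 x = 0"
    by (simp add: algebra_simps)
  note grad_eq = gradient_eq_lincomb[OF F1.grad_coeff_cross_conormal[OF x] F2.grad_coeff_cross_conormal[OF x]
      F3.grad_coeff_cross_conormal[OF x] this
      F1.conormal_nonzero[OF x] F2.conormal_nonzero[OF x] F3.conormal_nonzero[OF x] transversal basis]
  show ?thesis
    unfolding web_gradient_bound_def Let_def grad_eq by (rule norm_scaleR_sum3_le)
qed

lemma continuous_on_vector3 [continuous_intros]:
  "continuous_on S a \<Longrightarrow> continuous_on S b \<Longrightarrow> continuous_on S c \<Longrightarrow>
   continuous_on S (\<lambda>x. vector [a x, b x, c x] :: real^3)"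
proof -
  assume "continuous_on S a" "continuous_on S b" "continuous_on S c"
  have "continuous_on S (\<lambda>x. \<chi> i. (vector [a x, b x, c x] :: real^3) $ i)"
  proof (rule continuous_on_vec_lambda)
    fix i :: 3
    show "continuous_on S (\<lambda>x. (vector [a x, b x, c x] :: real^3) $ i)"
      using exhaust_3[of i] \<open>continuous_on S a\<close> \<open>continuous_on S b\<close> \<open>continuous_on S c\<close> by auto
  qed
  then show ?thesis by simp
qed

lemma continuous_on_curl: "smooth_on U \<nu> \<Longrightarrow> continuous_on U (curl \<nu>)"
  unfolding curl_def by (intro continuous_intros smooth_on_continuous_pdiff)

lemma continuous_on_grad_inner:
  assumes "smooth_on U f" "smooth_on U g"
  shows "continuous_on U (grad (\<lambda>y. f y \<bullet> g y))"
proof (rule continuous_on_eq)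
  show "continuous_on U (\<lambda>x. \<chi> j. pdiff j f x \<bullet> g x + f x \<bullet> pdiff j g x)"
    using assms by (intro continuous_on_vec_lambda continuous_intros smooth_on_continuous_pdiff
        smooth_on_continuous)
  show "(\<chi> j. pdiff j f x \<bullet> g x + f x \<bullet> pdiff j g x) = grad (\<lambda>y. f y \<bullet> g y) x" if "x \<in> U" for x
    using has_grad_imp_grad[OF has_grad_inner[OF assms that]] by simp
qed

lemma continuous_on_web_gradient_bound:
  assumes smooth: "smooth_on U \<nu>1" "smooth_on U \<nu>2" "smooth_on U \<nu>3" "smooth_on U v"
    and nonzero: "\<And>x. x \<in> U \<Longrightarrow> \<nu>1 x \<noteq> 0" "\<And>x. x \<in> U \<Longrightarrow> \<nu>2 x \<noteq> 0" "\<And>x. x \<in> U \<Longrightarrow> \<nu>3 x \<noteq> 0"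
    and transversal: "\<And>x. x \<in> U \<Longrightarrow> \<nu>1 x \<bullet> v x \<noteq> 0"
    and basis: "\<And>x. x \<in> U \<Longrightarrow> \<nu>1 x \<bullet> (\<nu>2 x \<times> \<nu>3 x) \<noteq> 0"
  shows "continuous_on U (web_gradient_bound \<nu>1 \<nu>2 \<nu>3 v)"
proof -
  have "continuous_on U \<nu>1" "continuous_on U \<nu>2" "continuous_on U \<nu>3" "continuous_on U v"
    "continuous_on U (curl \<nu>1)" "continuous_on U (curl \<nu>2)" "continuous_on U (curl \<nu>3)"
    "continuous_on U (grad (\<lambda>y. \<nu>1 y \<bullet> v y))" "continuous_on U (grad (\<lambda>y. \<nu>2 y \<bullet> v y))"
    "continuous_on U (grad (\<lambda>y. \<nu>3 y \<bullet> v y))"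
    using smooth by (simp_all add: smooth_on_continuous continuous_on_curl continuous_on_grad_inner)
  moreover have "\<nu>1 x \<bullet> \<nu>1 x \<noteq> 0" "\<nu>2 x \<bullet> \<nu>2 x \<noteq> 0" "\<nu>3 x \<bullet> \<nu>3 x \<noteq> 0" if "x \<in> U" for x
    using nonzero that by auto
  ultimately show ?thesis
    unfolding web_gradient_bound_def Let_def gradient_coeff_def
    using transversal basis by (intro continuous_intros continuous_on_cross) auto
qed

text \<open>What remains of an abelian relation after eliminating its curve component
  \<open>\<sigma> 3 = -(\<sigma> 0 + \<sigma> 1 + \<sigma> 2)\<close>.\<close>
definition surface_relation ::
  "(real^3) set \<Rightarrow> (real^3 \<Rightarrow> real^3) \<Rightarrow> (real^3 \<Rightarrow> real^3) \<Rightarrow> (real^3 \<Rightarrow> real^3)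
     \<Rightarrow> (real^3 \<Rightarrow> real^3) \<Rightarrow> (nat \<Rightarrow> real^3 \<Rightarrow> real^3) \<Rightarrow> bool" where
  "surface_relation V \<nu>1 \<nu>2 \<nu>3 v \<sigma> \<longleftrightarrow>
     closed_multiple V \<nu>1 (\<sigma> 0) \<and> closed_multiple V \<nu>2 (\<sigma> 1) \<and> closed_multiple V \<nu>3 (\<sigma> 2) \<and>
     (\<forall>x\<in>V. (\<sigma> 0 x + \<sigma> 1 x + \<sigma> 2 x) \<bullet> v x = 0)"

definition relation_coeffs ::
  "(real^3 \<Rightarrow> real^3) \<Rightarrow> (real^3 \<Rightarrow> real^3) \<Rightarrow> (real^3 \<Rightarrow> real^3) \<Rightarrow> (nat \<Rightarrow> real^3 \<Rightarrow> real^3)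
     \<Rightarrow> real^3 \<Rightarrow> real^3" where
  "relation_coeffs \<nu>1 \<nu>2 \<nu>3 \<sigma> x =
     vector [conormal_coeff \<nu>1 (\<sigma> 0) x, conormal_coeff \<nu>2 (\<sigma> 1) x, conormal_coeff \<nu>3 (\<sigma> 2) x]"

lemma abelian_relation_curve_component:
  "abelian_relation V \<nu>1 \<nu>2 \<nu>3 v \<sigma> \<Longrightarrow> x \<in> V \<Longrightarrow> \<sigma> 3 x = - (\<sigma> 0 x + \<sigma> 1 x + \<sigma> 2 x)"
  unfolding abelian_relation_def by (metis add.commute eq_neg_iff_add_eq_0)

lemma abelian_relation_imp_surface_relation:
  assumes "abelian_relation V \<nu>1 \<nu>2 \<nu>3 v \<sigma>"
  shows "surface_relation V \<nu>1 \<nu>2 \<nu>3 v \<sigma>"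
proof -
  have smooth: "smooth_on V (\<sigma> i) \<and> closed_form V (\<sigma> i)" if "i < 4" for i
    using assms that unfolding abelian_relation_def by blast
  have closed: "closed_multiple V \<nu> (\<sigma> i)"
    if "i < 4" "\<forall>x\<in>V. \<forall>t. \<nu> x \<bullet> t = 0 \<longrightarrow> \<sigma> i x \<bullet> t = 0" for \<nu> i
    using smooth[OF that(1)] that(2) unfolding closed_multiple_def smooth_on_def
    by (metis iter_pd.simps(1))
  have "(\<sigma> 0 x + \<sigma> 1 x + \<sigma> 2 x) \<bullet> v x = 0" if "x \<in> V" for x
    using abelian_relation_curve_component[OF assms that] assms that
    unfolding abelian_relation_def by (metis inner_minus_left neg_equal_0_iff_equal)
  then show ?thesis
    using assms unfolding surface_relation_def abelian_relation_def by (simp add: closed)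
qed

lemma surface_relation_sum:
  assumes "\<And>k. k \<in> J \<Longrightarrow> surface_relation V \<nu>1 \<nu>2 \<nu>3 v (\<rho> k)"
  shows "surface_relation V \<nu>1 \<nu>2 \<nu>3 v (\<lambda>i x. \<Sum>k\<in>J. c k *\<^sub>R \<rho> k i x)"
proof -
  have "(\<Sum>k\<in>J. c k *\<^sub>R \<rho> k 0 x + c k *\<^sub>R \<rho> k 1 x + c k *\<^sub>R \<rho> k 2 x) \<bullet> v x = 0" if "x \<in> V" for x
    using assms that unfolding surface_relation_def
    by (simp add: inner_sum_left inner_add_left flip: scaleR_add_right)
  then show ?thesis
    using assms unfolding surface_relation_def by (auto intro!: closed_multiple_sum simp: sum.distrib)
qed

lemma relation_coeffs_sum:
  "relation_coeffs \<nu>1 \<nu>2 \<nu>3 (\<lambda>i x. \<Sum>k\<in>J. c k *\<^sub>R \<rho> k i x) x = (\<Sum>k\<in>J. c k *\<^sub>R relation_coeffs \<nu>1 \<nu>2 \<nu>3 (\<rho> k) x)"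
  unfolding relation_coeffs_def conormal_coeff_def vec_eq_iff forall_3
  by (simp add: inner_sum_left sum_component sum_divide_distrib)

text \<open>Gronwall's argument: \<open>exp (\<mp>L s) \<phi> s\<close> is monotone on either side of \<open>t\<^sub>0\<close>.\<close>
lemma nonneg_vanishes_if_deriv_bounded:
  fixes \<phi> \<phi>' :: "real \<Rightarrow> real"
  assumes deriv: "\<And>s. s \<in> {a<..<b} \<Longrightarrow> (\<phi> has_real_derivative \<phi>' s) (at s)"
    and bound: "\<And>s. s \<in> {a<..<b} \<Longrightarrow> \<bar>\<phi>' s\<bar> \<le> L * \<phi> s"
    and nonneg: "\<And>s. s \<in> {a<..<b} \<Longrightarrow> 0 \<le> \<phi> s"
    and t0: "t0 \<in> {a<..<b}" "\<phi> t0 = 0" and t: "t \<in> {a<..<b}"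
  shows "\<phi> t = 0"
proof -
  have weighted: "((\<lambda>s. exp (c * s) * \<phi> s) has_real_derivative exp (c * s) * (\<phi>' s + c * \<phi> s)) (at s)"
    if "s \<in> {a<..<b}" for c s
    by (auto intro!: derivative_eq_intros deriv[OF that] simp: algebra_simps)
  have "\<phi> t \<le> 0"
  proof (cases "t0 \<le> t")
    case True
    have "exp (- L * t) * \<phi> t \<le> exp (- L * t0) * \<phi> t0"
    proof (rule DERIV_nonpos_imp_nonincreasing[of t0 t "\<lambda>s. exp (- L * s) * \<phi> s", OF True])
      fix s assume "t0 \<le> s" "s \<le> t"
      then have s: "s \<in> {a<..<b}" using t0 t by auto
      have "exp (- L * s) * (\<phi>' s + - L * \<phi> s) \<le> 0"
        using bound[OF s] by (intro mult_nonneg_nonpos) auto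
      then show "\<exists>y. ((\<lambda>s. exp (- L * s) * \<phi> s) has_real_derivative y) (at s) \<and> y \<le> 0"
        using weighted[OF s] by blast
    qed
    then show ?thesis using t0(2) by (simp add: mult_le_0_iff)
  next
    case False
    have "exp (L * t) * \<phi> t \<le> exp (L * t0) * \<phi> t0"
    proof (rule DERIV_nonneg_imp_nondecreasing[of t t0 "\<lambda>s. exp (L * s) * \<phi> s"])
      show "t \<le> t0" using False by simp
    next
      fix s assume "t \<le> s" "s \<le> t0"
      then have s: "s \<in> {a<..<b}" using t0 t by auto
      have "0 \<le> exp (L * s) * (\<phi>' s + L * \<phi> s)"
        using bound[OF s] by (intro mult_nonneg_nonneg) auto
      then show "\<exists>y. ((\<lambda>s. exp (L * s) * \<phi> s) has_real_derivative y) (at s) \<and> 0 \<le> y"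
        using weighted[OF s] by blast
    qed
    then show ?thesis using t0(2) by (simp add: mult_le_0_iff)
  qed
  with nonneg[OF t] show ?thesis by simp
qed

lemma abs_inner3_le_sum_squares:
  fixes u1 u2 u3 w1 w2 w3 K :: real
  assumes "\<bar>w1\<bar> \<le> K * (\<bar>u1\<bar> + \<bar>u2\<bar> + \<bar>u3\<bar>)" "\<bar>w2\<bar> \<le> K * (\<bar>u1\<bar> + \<bar>u2\<bar> + \<bar>u3\<bar>)"
    "\<bar>w3\<bar> \<le> K * (\<bar>u1\<bar> + \<bar>u2\<bar> + \<bar>u3\<bar>)" "0 \<le> K"
  shows "\<bar>u1 * w1 + u2 * w2 + u3 * w3\<bar> \<le> (3 * K) * (u1\<^sup>2 + u2\<^sup>2 + u3\<^sup>2)"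
proof -
  define S where "S = \<bar>u1\<bar> + \<bar>u2\<bar> + \<bar>u3\<bar>"
  have "\<bar>u1 * w1 + u2 * w2 + u3 * w3\<bar> \<le> \<bar>u1\<bar> * \<bar>w1\<bar> + \<bar>u2\<bar> * \<bar>w2\<bar> + \<bar>u3\<bar> * \<bar>w3\<bar>"
    using abs_triangle_ineq[of "u1 * w1 + u2 * w2" "u3 * w3"] abs_triangle_ineq[of "u1 * w1" "u2 * w2"]
    unfolding abs_mult[symmetric] by linarith
  also have "\<dots> \<le> \<bar>u1\<bar> * (K * S) + \<bar>u2\<bar> * (K * S) + \<bar>u3\<bar> * (K * S)"
    using assms unfolding S_def[symmetric] by (intro add_mono mult_left_mono) auto
  also have "\<dots> = K * S\<^sup>2" unfolding S_def by (simp add: algebra_simps power2_eq_square)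
  also have "\<dots> \<le> K * (3 * (u1\<^sup>2 + u2\<^sup>2 + u3\<^sup>2))"
  proof (rule mult_left_mono)
    have amgm: "2 * \<bar>x\<bar> * \<bar>y\<bar> \<le> x\<^sup>2 + y\<^sup>2" for x y :: real
      using sum_squares_bound[of "\<bar>x\<bar>" "\<bar>y\<bar>"] by (simp add: power2_eq_square)
    have "S\<^sup>2 = u1\<^sup>2 + u2\<^sup>2 + u3\<^sup>2 + 2 * \<bar>u1\<bar> * \<bar>u2\<bar> + 2 * \<bar>u1\<bar> * \<bar>u3\<bar> + 2 * \<bar>u2\<bar> * \<bar>u3\<bar>"
      unfolding S_def by (simp add: power2_eq_square algebra_simps)
    then show "S\<^sup>2 \<le> 3 * (u1\<^sup>2 + u2\<^sup>2 + u3\<^sup>2)"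
      using amgm[of u1 u2] amgm[of u1 u3] amgm[of u2 u3] by argo
  qed (fact assms(4))
  finally show ?thesis by (simp add: algebra_simps)
qed

lemma vanishing_propagates3:
  fixes f1 f2 f3 g1 g2 g3 :: "real \<Rightarrow> real"
  assumes deriv: "\<And>s. s \<in> {a<..<b} \<Longrightarrow>
      (f1 has_real_derivative g1 s) (at s) \<and> (f2 has_real_derivative g2 s) (at s) \<and>
      (f3 has_real_derivative g3 s) (at s)"
    and bound: "\<And>s. s \<in> {a<..<b} \<Longrightarrow> \<bar>g1 s\<bar> \<le> K * (\<bar>f1 s\<bar> + \<bar>f2 s\<bar> + \<bar>f3 s\<bar>) \<and>
      \<bar>g2 s\<bar> \<le> K * (\<bar>f1 s\<bar> + \<bar>f2 s\<bar> + \<bar>f3 s\<bar>) \<and> \<bar>g3 s\<bar> \<le> K * (\<bar>f1 s\<bar> + \<bar>f2 s\<bar> + \<bar>f3 s\<bar>)"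
    and "0 \<le> K"
    and t0: "t0 \<in> {a<..<b}" "f1 t0 = 0" "f2 t0 = 0" "f3 t0 = 0" and t: "t \<in> {a<..<b}"
  shows "f1 t = 0 \<and> f2 t = 0 \<and> f3 t = 0"
proof -
  have "(\<lambda>s. (f1 s)\<^sup>2 + (f2 s)\<^sup>2 + (f3 s)\<^sup>2) t = 0"
  proof (rule nonneg_vanishes_if_deriv_bounded[OF _ _ _ t0(1) _ t])
    fix s assume s: "s \<in> {a<..<b}"
    show "((\<lambda>s. (f1 s)\<^sup>2 + (f2 s)\<^sup>2 + (f3 s)\<^sup>2) has_real_derivative
        2 * (f1 s * g1 s + f2 s * g2 s + f3 s * g3 s)) (at s)"
      using deriv[OF s] by (auto intro!: derivative_eq_intros simp: algebra_simps)
    show "\<bar>2 * (f1 s * g1 s + f2 s * g2 s + f3 s * g3 s)\<bar> \<le> 6 * K * ((\<lambda>s. (f1 s)\<^sup>2 + (f2 s)\<^sup>2 + (f3 s)\<^sup>2) s)"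
      using abs_inner3_le_sum_squares[of "g1 s" K "f1 s" "f2 s" "f3 s" "g2 s" "g3 s"] bound[OF s] \<open>0 \<le> K\<close>
      by (simp add: abs_mult power2_eq_square)
  qed (use t0 in simp_all)
  then show ?thesis by (simp add: add_nonneg_eq_0_iff)
qed

lemma line_in_box_iff:
  fixes q lo hi :: "real^'n"
  assumes "q \<in> box lo hi"
  shows "q + t *\<^sub>R axis j 1 \<in> box lo hi \<longleftrightarrow> t \<in> {lo $ j - q $ j<..<hi $ j - q $ j}"
  using assms unfolding mem_box_cart by (auto simp: axis_def)

lemma orthogonal_vectors3_dependent:
  fixes E :: "nat \<Rightarrow> real^3" and a :: "real^3"
  assumes "a \<noteq> 0" "\<And>k. k < 3 \<Longrightarrow> E k \<bullet> a = 0"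
  obtains c where "(\<Sum>k<3. c k *\<^sub>R E k) = 0" "\<exists>k<3. c k \<noteq> 0"
proof -
  define R where "R = (vector [E 0, E 1, E 2] :: real^3^3)"
  have "R *v a = 0"
    using assms(2)[of 0] assms(2)[of 1] assms(2)[of 2]
    unfolding R_def by (simp add: vec_eq_iff forall_3 matrix_vector_mult_def sum_3 inner_vec_def)
  then have "det R = 0"
    using assms(1) matrix_left_invertible_ker invertible_det_nz invertible_left_inverse by blast
  then have "det (transpose R) = 0" by (simp add: det_transpose)
  then have "\<not> (\<exists>B. B ** transpose R = mat 1)"
    using invertible_det_nz invertible_left_inverse by blast
  then obtain d where d: "transpose R *v d = 0" "d \<noteq> 0" using matrix_left_invertible_ker by blast
  define c where "c k = (if k = 0 then d $ 1 else if k = 1 then d $ 2 else d $ 3)" for k :: nat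
  have "{..<3::nat} = {0, 1, 2}" by auto
  then have "(\<Sum>k<3. c k *\<^sub>R E k) = 0"
    using d(1) unfolding R_def c_def by (simp add: vec_eq_iff forall_3 matrix_vector_mult_def sum_3 transpose_def algebra_simps)
  moreover have "\<exists>k<3. c k \<noteq> 0"
  proof (rule ccontr)
    assume "\<not> (\<exists>k<3. c k \<noteq> 0)"
    then have "c 0 = 0" "c 1 = 0" "c 2 = 0" by auto
    then have "d = 0" unfolding c_def vec_eq_iff forall_3 by simp
    with d(2) show False by simp
  qed
  ultimately show ?thesis by (rule that)
qed

lemma forms_lin_indep_mono:
  assumes "forms_lin_indep V k \<rho>" "m \<le> k"
  shows "forms_lin_indep V m \<rho>"
  unfolding forms_lin_indep_def
proof (intro allI impI)
  fix c :: "nat \<Rightarrow> real" and j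
  assume c: "\<forall>i<4. \<forall>x\<in>V. (\<Sum>j<m. c j *\<^sub>R \<rho> j i x) = 0" and j: "j < m"
  define c' where "c' j = (if j < m then c j else 0)" for j
  have "(\<Sum>j<k. c' j *\<^sub>R \<rho> j i x) = (\<Sum>j<m. c j *\<^sub>R \<rho> j i x)" for i x
    using assms(2) unfolding c'_def
    by (intro sum.mono_neutral_cong_right) auto
  then have "\<forall>j<k. c' j = 0" using assms(1) c unfolding forms_lin_indep_def by simp
  moreover have "j < k" using j assms(2) by simp
  ultimately have "c' j = 0" by blast
  then show "c j = 0" using j unfolding c'_def by simp
qed

lemma web_rank_le_2I:
  assumes "\<And>\<rho>. \<forall>k<3. abelian_relation V \<nu>1 \<nu>2 \<nu>3 v (\<rho> k) \<Longrightarrow> \<not> forms_lin_indep V 3 \<rho>"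
  shows "web_rank V \<nu>1 \<nu>2 \<nu>3 v \<le> 2"
  unfolding web_rank_def Sup_le_iff
proof clarify
  fix k \<rho>
  assume rel: "\<forall>j<k. abelian_relation V \<nu>1 \<nu>2 \<nu>3 v (\<rho> j)" and indep: "forms_lin_indep V k \<rho>"
  have "\<not> 3 \<le> k"
  proof
    assume "3 \<le> k"
    then have "\<forall>j<3. abelian_relation V \<nu>1 \<nu>2 \<nu>3 v (\<rho> j)" "forms_lin_indep V 3 \<rho>"
      using rel forms_lin_indep_mono[OF indep] by auto
    with assms show False by blast
  qed
  then show "enat k \<le> 2" by (simp add: numeral_eq_enat)
qed

locale web4 =
  fixes U :: "(real^3) set" and \<nu>1 \<nu>2 \<nu>3 v :: "real^3 \<Rightarrow> real^3"
  assumes surface: "surface_foliation U \<nu>1" "surface_foliation U \<nu>2" "surface_foliation U \<nu>3"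
    and curve: "curve_foliation U v"
    and nondegenerate: "nondegenerate_web U \<nu>1 \<nu>2 \<nu>3 v"
begin

lemma smooth: "smooth_on U \<nu>1" "smooth_on U \<nu>2" "smooth_on U \<nu>3" "smooth_on U v"
  using surface curve unfolding surface_foliation_def curve_foliation_def by auto

lemma conormal_nonzero: "x \<in> U \<Longrightarrow> \<nu>1 x \<noteq> 0" "x \<in> U \<Longrightarrow> \<nu>2 x \<noteq> 0" "x \<in> U \<Longrightarrow> \<nu>3 x \<noteq> 0"
  using surface unfolding surface_foliation_def by auto

lemma transversal: "x \<in> U \<Longrightarrow> \<nu>1 x \<bullet> v x \<noteq> 0" "x \<in> U \<Longrightarrow> \<nu>2 x \<bullet> v x \<noteq> 0" "x \<in> U \<Longrightarrow> \<nu>3 x \<bullet> v x \<noteq> 0"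
  using nondegenerate unfolding nondegenerate_web_def by auto

lemma triple_product_nonzero:
  "x \<in> U \<Longrightarrow> \<nu>1 x \<bullet> (\<nu>2 x \<times> \<nu>3 x) \<noteq> 0" "x \<in> U \<Longrightarrow> \<nu>2 x \<bullet> (\<nu>3 x \<times> \<nu>1 x) \<noteq> 0"
  "x \<in> U \<Longrightarrow> \<nu>3 x \<bullet> (\<nu>1 x \<times> \<nu>2 x) \<noteq> 0"
  using nondegenerate unfolding nondegenerate_web_def by (simp_all add: dot_cross_det cross3_simps)

definition gradient_bound :: "real^3 \<Rightarrow> real" where
  "gradient_bound x = web_gradient_bound \<nu>1 \<nu>2 \<nu>3 v x + web_gradient_bound \<nu>2 \<nu>3 \<nu>1 v x
     + web_gradient_bound \<nu>3 \<nu>1 \<nu>2 v x"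

lemma gradient_bound_nonneg: "0 \<le> gradient_bound x"
  unfolding gradient_bound_def by (simp add: web_gradient_bound_nonneg)

lemma continuous_on_gradient_bound: "continuous_on U gradient_bound"
  unfolding gradient_bound_def
  by (intro continuous_on_add continuous_on_web_gradient_bound smooth conormal_nonzero transversal
      triple_product_nonzero; assumption)

lemma closed_conormal_multiple_relation:
  assumes "open V" "V \<subseteq> U" "surface_relation V \<nu>1 \<nu>2 \<nu>3 v \<sigma>"
  shows "closed_conormal_multiple V \<nu>1 (\<sigma> 0)" "closed_conormal_multiple V \<nu>2 (\<sigma> 1)"
    "closed_conormal_multiple V \<nu>3 (\<sigma> 2)"
  using assms smooth_on_subset[OF smooth(1) assms(2)] smooth_on_subset[OF smooth(2) assms(2)]
    smooth_on_subset[OF smooth(3) assms(2)] conormal_nonzero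
  unfolding closed_conormal_multiple_def surface_relation_def by auto

lemma norm_grad_relation_coeff_le:
  assumes V: "open V" "V \<subseteq> U" and rel: "surface_relation V \<nu>1 \<nu>2 \<nu>3 v \<sigma>" and x: "x \<in> V"
  defines "S \<equiv> \<bar>conormal_coeff \<nu>1 (\<sigma> 0) x\<bar> + \<bar>conormal_coeff \<nu>2 (\<sigma> 1) x\<bar> + \<bar>conormal_coeff \<nu>3 (\<sigma> 2) x\<bar>"
  shows "norm (grad (conormal_coeff \<nu>1 (\<sigma> 0)) x) \<le> gradient_bound x * S"
    "norm (grad (conormal_coeff \<nu>2 (\<sigma> 1)) x) \<le> gradient_bound x * S"
    "norm (grad (conormal_coeff \<nu>3 (\<sigma> 2)) x) \<le> gradient_bound x * S"
proof -
  note F = closed_conormal_multiple_relation[OF V rel]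
  have xU: "x \<in> U" using x V by auto
  have sum: "\<And>y. y \<in> V \<Longrightarrow> (\<sigma> 0 y + \<sigma> 1 y + \<sigma> 2 y) \<bullet> v y = 0"
    using rel unfolding surface_relation_def by blast
  have v: "smooth_on V v" using smooth_on_subset[OF smooth(4) V(2)] .
  have S: "0 \<le> S" unfolding S_def by simp
  have le: "web_gradient_bound \<nu>1 \<nu>2 \<nu>3 v x * S \<le> gradient_bound x * S"
      "web_gradient_bound \<nu>2 \<nu>3 \<nu>1 v x * S \<le> gradient_bound x * S"
      "web_gradient_bound \<nu>3 \<nu>1 \<nu>2 v x * S \<le> gradient_bound x * S"
    unfolding gradient_bound_def using S web_gradient_bound_nonneg by (auto intro!: mult_right_mono)
  show "norm (grad (conormal_coeff \<nu>1 (\<sigma> 0)) x) \<le> gradient_bound x * S"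
    using norm_grad_conormal_coeff_le[OF F(1,2,3) v sum x transversal(1)[OF xU]
        triple_product_nonzero(1)[OF xU]] le(1)
    unfolding S_def by linarith
  show "norm (grad (conormal_coeff \<nu>2 (\<sigma> 1)) x) \<le> gradient_bound x * S"
    using norm_grad_conormal_coeff_le[OF F(2,3,1) v _ x transversal(2)[OF xU]
        triple_product_nonzero(2)[OF xU]] sum le(2)
    unfolding S_def by (simp add: ac_simps)
  show "norm (grad (conormal_coeff \<nu>3 (\<sigma> 2)) x) \<le> gradient_bound x * S"
    using norm_grad_conormal_coeff_le[OF F(3,1,2) v _ x transversal(3)[OF xU]
        triple_product_nonzero(3)[OF xU]] sum le(3)
    unfolding S_def by (simp add: ac_simps)
qed

lemma relation_coeffs_orthogonal:
  assumes V: "open V" "V \<subseteq> U" and rel: "surface_relation V \<nu>1 \<nu>2 \<nu>3 v \<sigma>" and x: "x \<in> V"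
  shows "relation_coeffs \<nu>1 \<nu>2 \<nu>3 \<sigma> x \<bullet> vector [\<nu>1 x \<bullet> v x, \<nu>2 x \<bullet> v x, \<nu>3 x \<bullet> v x] = 0"
proof -
  note F = closed_conormal_multiple_relation[OF V rel]
  have "(\<sigma> 0 x + \<sigma> 1 x + \<sigma> 2 x) \<bullet> v x = 0" using rel x unfolding surface_relation_def by blast
  then show ?thesis
    unfolding closed_conormal_multiple.form_eq_coeff_scaleR[OF F(1) x]
      closed_conormal_multiple.form_eq_coeff_scaleR[OF F(2) x]
      closed_conormal_multiple.form_eq_coeff_scaleR[OF F(3) x]
    by (simp add: relation_coeffs_def inner_vec_def sum_3 inner_add_left algebra_simps)
qed

lemma relation_vanishes_if_coeffs_vanish:
  assumes V: "open V" "V \<subseteq> U" and rel: "surface_relation V \<nu>1 \<nu>2 \<nu>3 v \<sigma>" and x: "x \<in> V"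
    and zero: "relation_coeffs \<nu>1 \<nu>2 \<nu>3 \<sigma> x = 0"
  shows "\<sigma> 0 x = 0" "\<sigma> 1 x = 0" "\<sigma> 2 x = 0"
proof -
  note F = closed_conormal_multiple_relation[OF V rel]
  have "conormal_coeff \<nu>1 (\<sigma> 0) x = 0" "conormal_coeff \<nu>2 (\<sigma> 1) x = 0" "conormal_coeff \<nu>3 (\<sigma> 2) x = 0"
    using zero unfolding relation_coeffs_def vec_eq_iff forall_3 by simp_all
  then show "\<sigma> 0 x = 0" "\<sigma> 1 x = 0" "\<sigma> 2 x = 0"
    using closed_conormal_multiple.form_eq_coeff_scaleR[OF F(1) x]
      closed_conormal_multiple.form_eq_coeff_scaleR[OF F(2) x]
      closed_conormal_multiple.form_eq_coeff_scaleR[OF F(3) x] by simp_all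
qed

lemma relation_coeffs_zero_along_line:
  assumes box: "box lo hi \<subseteq> U" and rel: "surface_relation (box lo hi) \<nu>1 \<nu>2 \<nu>3 v \<sigma>"
    and K: "\<forall>z\<in>box lo hi. gradient_bound z \<le> K"
    and q: "q \<in> box lo hi" and qc: "q + c *\<^sub>R axis j 1 \<in> box lo hi"
    and zero: "relation_coeffs \<nu>1 \<nu>2 \<nu>3 \<sigma> q = 0"
  shows "relation_coeffs \<nu>1 \<nu>2 \<nu>3 \<sigma> (q + c *\<^sub>R axis j 1) = 0"
proof -
  note F = closed_conormal_multiple_relation[OF open_box box rel]
  define f1 f2 f3 where "f1 s = conormal_coeff \<nu>1 (\<sigma> 0) (q + s *\<^sub>R axis j 1)"
    "f2 s = conormal_coeff \<nu>2 (\<sigma> 1) (q + s *\<^sub>R axis j 1)"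
    "f3 s = conormal_coeff \<nu>3 (\<sigma> 2) (q + s *\<^sub>R axis j 1)" for s
  define g1 g2 g3 where "g1 s = grad (conormal_coeff \<nu>1 (\<sigma> 0)) (q + s *\<^sub>R axis j 1) $ j"
    "g2 s = grad (conormal_coeff \<nu>2 (\<sigma> 1)) (q + s *\<^sub>R axis j 1) $ j"
    "g3 s = grad (conormal_coeff \<nu>3 (\<sigma> 2)) (q + s *\<^sub>R axis j 1) $ j" for s
  have "f1 c = 0 \<and> f2 c = 0 \<and> f3 c = 0"
  proof (rule vanishing_propagates3[where ?f1.0 = f1 and ?f2.0 = f2 and ?f3.0 = f3 and ?g1.0 = g1
        and ?g2.0 = g2 and ?g3.0 = g3 and K = K and a = "lo $ j - q $ j" and b = "hi $ j - q $ j"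
        and ?t0.0 = 0 and t = c])
    fix s assume "s \<in> {lo $ j - q $ j<..<hi $ j - q $ j}"
    then have z: "q + s *\<^sub>R axis j 1 \<in> box lo hi" using line_in_box_iff[OF q] by blast
    show "(f1 has_real_derivative g1 s) (at s) \<and> (f2 has_real_derivative g2 s) (at s) \<and>
        (f3 has_real_derivative g3 s) (at s)"
      unfolding f1_f2_f3_def g1_g2_g3_def
      by (intro conjI has_real_derivative_line_shift closed_conormal_multiple.coeff_has_grad[OF F(1) z]
          closed_conormal_multiple.coeff_has_grad[OF F(2) z] closed_conormal_multiple.coeff_has_grad[OF F(3) z])
    have "gradient_bound (q + s *\<^sub>R axis j 1) * (\<bar>f1 s\<bar> + \<bar>f2 s\<bar> + \<bar>f3 s\<bar>) \<le> K * (\<bar>f1 s\<bar> + \<bar>f2 s\<bar> + \<bar>f3 s\<bar>)"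
      using K z by (intro mult_right_mono) auto
    moreover have "\<bar>g1 s\<bar> \<le> norm (grad (conormal_coeff \<nu>1 (\<sigma> 0)) (q + s *\<^sub>R axis j 1))"
      "\<bar>g2 s\<bar> \<le> norm (grad (conormal_coeff \<nu>2 (\<sigma> 1)) (q + s *\<^sub>R axis j 1))"
      "\<bar>g3 s\<bar> \<le> norm (grad (conormal_coeff \<nu>3 (\<sigma> 2)) (q + s *\<^sub>R axis j 1))"
      unfolding g1_g2_g3_def by (rule component_le_norm_cart)+
    ultimately show "\<bar>g1 s\<bar> \<le> K * (\<bar>f1 s\<bar> + \<bar>f2 s\<bar> + \<bar>f3 s\<bar>) \<and> \<bar>g2 s\<bar> \<le> K * (\<bar>f1 s\<bar> + \<bar>f2 s\<bar> + \<bar>f3 s\<bar>) \<and>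
        \<bar>g3 s\<bar> \<le> K * (\<bar>f1 s\<bar> + \<bar>f2 s\<bar> + \<bar>f3 s\<bar>)"
      using norm_grad_relation_coeff_le[OF open_box box rel z] unfolding f1_f2_f3_def by linarith
  next
    show "0 \<le> K" using K q gradient_bound_nonneg order_trans by blast
    show "0 \<in> {lo $ j - q $ j<..<hi $ j - q $ j}" "c \<in> {lo $ j - q $ j<..<hi $ j - q $ j}"
      using line_in_box_iff[OF q, of 0 j] line_in_box_iff[OF q, of c j] q qc by auto
    show "f1 0 = 0" "f2 0 = 0" "f3 0 = 0"
      using zero unfolding f1_f2_f3_def relation_coeffs_def vec_eq_iff forall_3 by simp_all
  qed
  then show ?thesis unfolding f1_f2_f3_def relation_coeffs_def by (simp add: vec_eq_iff forall_3)
qed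

lemma relation_coeffs_zero_on_box:
  assumes box: "box lo hi \<subseteq> U" and rel: "surface_relation (box lo hi) \<nu>1 \<nu>2 \<nu>3 v \<sigma>"
    and K: "\<forall>z\<in>box lo hi. gradient_bound z \<le> K"
    and p: "p \<in> box lo hi" and zero: "relation_coeffs \<nu>1 \<nu>2 \<nu>3 \<sigma> p = 0"
    and x: "x \<in> box lo hi"
  shows "relation_coeffs \<nu>1 \<nu>2 \<nu>3 \<sigma> x = 0"
proof -
  note step = relation_coeffs_zero_along_line[OF box rel K]
  define q1 where "q1 = p + (x $ 1 - p $ 1) *\<^sub>R axis 1 (1::real)"
  define q2 where "q2 = q1 + (x $ 2 - p $ 2) *\<^sub>R axis 2 (1::real)"
  have q1_nth: "q1 $ i = (if i = 1 then x $ i else p $ i)" for i by (simp add: q1_def axis_def)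
  have q2_nth: "q2 $ i = (if i = 3 then p $ i else x $ i)" for i
    using exhaust_3[of i] by (auto simp: q2_def q1_def axis_def)
  have q1: "q1 \<in> box lo hi" and q2: "q2 \<in> box lo hi"
    using p x unfolding mem_box_cart q1_nth q2_nth by auto
  have x_eq: "x = q2 + (x $ 3 - p $ 3) *\<^sub>R axis 3 (1::real)"
    unfolding vec_eq_iff forall_3 using q2_nth by (simp add: axis_def)
  have "relation_coeffs \<nu>1 \<nu>2 \<nu>3 \<sigma> q1 = 0" using step[OF p _ zero] q1 unfolding q1_def by blast
  then have "relation_coeffs \<nu>1 \<nu>2 \<nu>3 \<sigma> q2 = 0" using step[OF q1] q2 unfolding q2_def by blast
  then show ?thesis using step[OF q2] x x_eq by metis
qed

lemma abelian_relations_dependent_on_box: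
  assumes box: "box lo hi \<subseteq> U" and K: "\<forall>z\<in>box lo hi. gradient_bound z \<le> K"
    and p: "p \<in> box lo hi" and rel: "\<forall>k<3. abelian_relation (box lo hi) \<nu>1 \<nu>2 \<nu>3 v (\<rho> k)"
  shows "\<not> forms_lin_indep (box lo hi) 3 \<rho>"
proof
  assume indep: "forms_lin_indep (box lo hi) 3 \<rho>"
  have srel: "surface_relation (box lo hi) \<nu>1 \<nu>2 \<nu>3 v (\<rho> k)" if "k < 3" for k
    using rel that abelian_relation_imp_surface_relation by blast
  have "\<nu>1 p \<bullet> v p \<noteq> 0" using transversal(1) p box by blast
  then have "vector [\<nu>1 p \<bullet> v p, \<nu>2 p \<bullet> v p, \<nu>3 p \<bullet> v p] \<noteq> (0 :: real^3)"
    by (simp add: vec_eq_iff forall_3)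
  then obtain c where c: "(\<Sum>k<3. c k *\<^sub>R relation_coeffs \<nu>1 \<nu>2 \<nu>3 (\<rho> k) p) = 0" "\<exists>k<3. c k \<noteq> 0"
    by (rule orthogonal_vectors3_dependent) (use relation_coeffs_orthogonal[OF open_box box srel p] in auto)
  define \<sigma> where "\<sigma> i x = (\<Sum>k<3. c k *\<^sub>R \<rho> k i x)" for i x
  have rel_\<sigma>: "surface_relation (box lo hi) \<nu>1 \<nu>2 \<nu>3 v \<sigma>"
    unfolding \<sigma>_def by (rule surface_relation_sum) (use srel in auto)
  have "relation_coeffs \<nu>1 \<nu>2 \<nu>3 \<sigma> p = 0" using c(1) unfolding \<sigma>_def relation_coeffs_sum .
  then have surface_zero: "\<sigma> 0 x = 0" "\<sigma> 1 x = 0" "\<sigma> 2 x = 0" if "x \<in> box lo hi" for x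
    using relation_vanishes_if_coeffs_vanish[OF open_box box rel_\<sigma> that]
      relation_coeffs_zero_on_box[OF box rel_\<sigma> K p _ that] by blast+
  have curve_zero: "\<sigma> 3 x = 0" if x: "x \<in> box lo hi" for x
  proof -
    have "\<rho> k 3 x = - (\<rho> k 0 x + \<rho> k 1 x + \<rho> k 2 x)" if "k < 3" for k
      using abelian_relation_curve_component rel that x by blast
    then have "\<sigma> 3 x = - (\<sigma> 0 x + \<sigma> 1 x + \<sigma> 2 x)"
      unfolding \<sigma>_def by (simp add: scaleR_diff_right sum_subtractf sum_negf)
    then show ?thesis using surface_zero[OF x] by simp
  qed
  have "\<sigma> i x = 0" if "i < 4" "x \<in> box lo hi" for i x
  proof -
    have "i = 0 \<or> i = 1 \<or> i = 2 \<or> i = 3" using that(1) by auto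
    then show ?thesis using surface_zero[OF that(2)] curve_zero[OF that(2)] by auto
  qed
  then have "\<forall>i<4. \<forall>x\<in>box lo hi. (\<Sum>k<3. c k *\<^sub>R \<rho> k i x) = 0" unfolding \<sigma>_def by blast
  then show False using indep c(2) unfolding forms_lin_indep_def by blast
qed

end

theorem theorem3:
  fixes U :: "(real^3) set" and \<nu>1 \<nu>2 \<nu>3 v :: "real^3 \<Rightarrow> real^3"
  assumes "open U"
    and "surface_foliation U \<nu>1" and "surface_foliation U \<nu>2" and "surface_foliation U \<nu>3"
    and "curve_foliation U v"
    and "nondegenerate_web U \<nu>1 \<nu>2 \<nu>3 v"
  shows "\<forall>p\<in>U. \<exists>V. open V \<and> p \<in> V \<and> V \<subseteq> U \<and> web_rank V \<nu>1 \<nu>2 \<nu>3 v \<le> 2"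
proof
  fix p assume p: "p \<in> U"
  interpret web4 U \<nu>1 \<nu>2 \<nu>3 v using assms(2-6) by unfold_locales
  obtain lo hi where box: "cbox lo hi \<subseteq> U" "p \<in> box lo hi"
    using open_contains_cbox[OF assms(1) p] by metis
  have "bounded (gradient_bound ` cbox lo hi)"
    by (intro compact_imp_bounded compact_continuous_image compact_cbox
        continuous_on_subset[OF continuous_on_gradient_bound box(1)])
  then obtain K where "\<forall>z\<in>cbox lo hi. norm (gradient_bound z) \<le> K"
    unfolding bounded_iff by blast
  then have K: "\<forall>z\<in>box lo hi. gradient_bound z \<le> K"
    using box_subset_cbox by fastforce
  have "web_rank (box lo hi) \<nu>1 \<nu>2 \<nu>3 v \<le> 2"
    using abelian_relations_dependent_on_box[OF _ K box(2)] box(1) box_subset_cbox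
    by (intro web_rank_le_2I) blast
  then show "\<exists>V. open V \<and> p \<in> V \<and> V \<subseteq> U \<and> web_rank V \<nu>1 \<nu>2 \<nu>3 v \<le> 2"
    using box box_subset_cbox open_box by blast
qed

end
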